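(* Let $(W,V)$ be an independent-type $\mathcal Y$-valued transition matrix on $\mathcal X$ with $W$ irreducible, and $P$ a distribution on $\mathcal X$. Then $$\mathcal L^I_{2,W,V}=\big\{([W,A],C)\in\mathcal G^I:\ A\in M_d(\mathbb R),\ A^Tu_{\mathcal X}=0,\ W[D(V_y),A]=WD(C_y)\ \forall y\in\mathcal Y\big\},$$ $$\mathcal L^I_{2,P,W,V}=\big\{([W,A],C)\in\mathcal G^I:\ A\in M_d(\mathbb R),\ A^Tu_{\mathcal X}=0,\ AP=0,\ W[D(V_y),A]=WD(C_y)\ \forall y\in\mathcal Y\big\},$$ where $[X,Y]=XY-YX$.
   Context: Let $\mathcal X=\{1,\dots,d\}$, $\mathcal Y=\{1,\dots,d_Y\}$, $u_{\mathcal X}\in\mathbb R^{\mathcal X}$ the all-ones vector. An independent-type $\mathcal Y$-valued transition matrix $(W,V)$ consists of a column-stochastic $d\times d$ matrix $W(x|x')$ and a transition matrix $V$ from $\mathcal X$ to $\mathcal Y$ ($V(y|x')\ge0$, $\sum_yV(y|x')=1$), defining $W_y:=WD(V_y)$, where $V_y\in\mathbb R^{\mathcal X}$, $V_y(x')=V(y|x')$, and $D(v)$ is the diagonal matrix with diagonal $v$. $\mathcal G^I$ is the set of pairs $(B,C)$ with $B$ a real $d\times d$ matrix vanishing wherever $W(x|x')=0$ and $C=(C_y)_{y\in\mathcal Y}$, $C_y\in\mathbb R^{\mathcal X}$, $C_y(x')=0$ wherever $V(y|x')=0$. $\mathcal L^I_{1,W,V}:=\{(B,C)\in\mathcal G^I: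 B^Tu_{\mathcal X}=0,\ \sum_yC_y=0\}$. Let $\mathcal L_2:=\{(W_yA-AW_y)_{y\in\mathcal Y}: A\in M_d(\mathbb R),\ A^Tu_{\mathcal X}=0\}$ and $\mathcal L_{2,P}:=\{(W_yA-AW_y)_{y}: A^Tu_{\mathcal X}=0,\ AP=0\}$. Then $\mathcal L^I_{2,W,V}:=\{(B,C)\in\mathcal L^I_{1,W,V}: (BD(V_y)+WD(C_y))_{y}\in\mathcal L_2\}$ and $\mathcal L^I_{2,P,W,V}:=\{(B,C)\in\mathcal L^I_{1,W,V}:(BD(V_y)+WD(C_y))_y\in\mathcal L_{2,P}\}$. *)

theory Defs
  imports "HOL-Analysis.Analysis"
begin

text \<open>States X = type 'x (finite), outputs Y = type 'y (finite).
  Matrices M :: real^'x^'x with entry M $ x $ x' = M(x|x').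
  V :: real^'x^'y with V $ y $ x' = V(y|x'), so V $ y is the vector V_y.\<close>

definition onesv :: "real^'n" where "onesv = (\<chi> i. 1)"

definition Dg :: "real^'n \<Rightarrow> real^'n^'n" where
  "Dg v = (\<chi> i j. if i = j then v $ i else 0)"

definition column_stochastic :: "real^'x^'x \<Rightarrow> bool" where
  "column_stochastic W \<longleftrightarrow> (\<forall>x x'. W $ x $ x' \<ge> 0) \<and> (\<forall>x'. (\<Sum>x\<in>UNIV. W $ x $ x') = 1)"

definition transition_to :: "real^'x^'y \<Rightarrow> bool" where
  "transition_to V \<longleftrightarrow> (\<forall>y x'. V $ y $ x' \<ge> 0) \<and> (\<forall>x'. (\<Sum>y\<in>UNIV. V $ y $ x') = 1)"

definition distribution :: "real^'x \<Rightarrow> bool" where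
  "distribution P \<longleftrightarrow> (\<forall>x. P $ x \<ge> 0) \<and> (\<Sum>x\<in>UNIV. P $ x) = 1"

definition irreducible_mat :: "real^'x^'x \<Rightarrow> bool" where
  "irreducible_mat W \<longleftrightarrow> (\<forall>x x'. (x', x) \<in> {(a, b). W $ b $ a > 0}\<^sup>+)"

definition Wy :: "real^'x^'x \<Rightarrow> real^'x^'y \<Rightarrow> 'y \<Rightarrow> real^'x^'x" where
  "Wy W V y = W ** Dg (V $ y)"

definition GI :: "real^'x^'x \<Rightarrow> real^'x^'y \<Rightarrow> ((real^'x^'x) \<times> ('y \<Rightarrow> real^'x)) set" where
  "GI W V = {(B, C). (\<forall>x x'. W $ x $ x' = 0 \<longrightarrow> B $ x $ x' = 0) \<and>
                     (\<forall>y x'. V $ y $ x' = 0 \<longrightarrow> C y $ x' = 0)}"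

definition L1I :: "real^'x^'x \<Rightarrow> real^'x^'y \<Rightarrow> ((real^'x^'x) \<times> ('y \<Rightarrow> real^'x)) set" where
  "L1I W V = {(B, C) \<in> GI W V. transpose B *v onesv = 0 \<and> (\<Sum>y\<in>UNIV. C y) = 0}"

definition L2 :: "real^'x^'x \<Rightarrow> real^'x^'y \<Rightarrow> ('y \<Rightarrow> real^'x^'x) set" where
  "L2 W V = {F. \<exists>A. transpose A *v onesv = 0 \<and> F = (\<lambda>y. Wy W V y ** A - A ** Wy W V y)}"

definition L2P :: "real^'x \<Rightarrow> real^'x^'x \<Rightarrow> real^'x^'y \<Rightarrow> ('y \<Rightarrow> real^'x^'x) set" where
  "L2P P W V = {F. \<exists>A. transpose A *v onesv = 0 \<and> A *v P = 0 \<and>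
                        F = (\<lambda>y. Wy W V y ** A - A ** Wy W V y)}"

definition L2I :: "real^'x^'x \<Rightarrow> real^'x^'y \<Rightarrow> ((real^'x^'x) \<times> ('y \<Rightarrow> real^'x)) set" where
  "L2I W V = {(B, C) \<in> L1I W V. (\<lambda>y. B ** Dg (V $ y) + W ** Dg (C y)) \<in> L2 W V}"

definition L2PI :: "real^'x \<Rightarrow> real^'x^'x \<Rightarrow> real^'x^'y \<Rightarrow> ((real^'x^'x) \<times> ('y \<Rightarrow> real^'x)) set" where
  "L2PI P W V = {(B, C) \<in> L1I W V. (\<lambda>y. B ** Dg (V $ y) + W ** Dg (C y)) \<in> L2P P W V}"

definition commut :: "real^'n^'n \<Rightarrow> real^'n^'n \<Rightarrow> real^'n^'n" where
  "commut X Y = X ** Y - Y ** X"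

end

theory Submission
  imports Defs
begin

text \<open>Summing the defining relation of \<open>\<L>\<^sup>I\<^sub>2\<close> over \<open>y\<close> uses
  \<open>\<Sum>\<^sub>y D(V\<^sub>y) = I\<close> and \<open>\<Sum>\<^sub>y C\<^sub>y = 0\<close> and leaves \<open>B = [W,A]\<close>; substituting this back, the
  relation for each single \<open>y\<close> becomes \<open>W[D(V\<^sub>y),A] = WD(C\<^sub>y)\<close>. Conversely, for \<open>B = [W,A]\<close>
  the column-sum condition on \<open>B\<close> follows from \<open>u\<^sup>TW = u\<^sup>T\<close> and \<open>u\<^sup>TA = 0\<close>, and
  \<open>\<Sum>\<^sub>y C\<^sub>y = 0\<close> follows because \<open>WD(\<Sum>\<^sub>y C\<^sub>y) = W[I,A] = 0\<close> while no column of \<open>W\<close>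
  vanishes.\<close>

lemma matrix_diff_ldistrib:
  fixes A :: "'a::ring_1^'n^'m"
  shows "A ** (B - C) = A ** B - A ** C"
  by (simp add: vec_eq_iff matrix_matrix_mult_def sum_subtractf algebra_simps)

lemma matrix_diff_rdistrib:
  fixes A :: "'a::ring_1^'n^'m"
  shows "(A - B) ** C = A ** C - B ** C"
  by (simp add: vec_eq_iff matrix_matrix_mult_def sum_subtractf algebra_simps)

lemma matrix_sum_ldistrib: "A ** (\<Sum>y\<in>S. F y) = (\<Sum>y\<in>S. A ** F y)"
  by (simp add: vec_eq_iff matrix_matrix_mult_def sum_distrib_left sum_component sum.swap[of _ S])

lemma matrix_sum_rdistrib: "(\<Sum>y\<in>S. F y) ** A = (\<Sum>y\<in>S. F y ** A)"
  by (simp add: vec_eq_iff matrix_matrix_mult_def sum_distrib_right sum_component sum.swap[of _ S])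

lemma Dg_sum: "Dg (\<Sum>y\<in>S. f y) = (\<Sum>y\<in>S. Dg (f y))"
  by (simp add: vec_eq_iff Dg_def sum_component)

lemma Dg_onesv: "Dg onesv = mat 1"
  by (simp add: vec_eq_iff Dg_def onesv_def mat_def)

lemma Dg_0: "Dg 0 = 0"
  by (simp add: vec_eq_iff Dg_def)

lemma onesv_vector_matrix_mult_stochastic:
  assumes "column_stochastic W"
  shows "onesv v* W = onesv"
  using assms by (simp add: vec_eq_iff column_stochastic_def onesv_def vector_matrix_mult_def)

lemma sum_transition_rows:
  assumes "transition_to V"
  shows "(\<Sum>y\<in>UNIV. V $ y) = onesv"
  using assms by (simp add: vec_eq_iff transition_to_def onesv_def sum_component)

lemma sum_Dg_transition:
  assumes "transition_to V"
  shows "(\<Sum>y\<in>UNIV. Dg (V $ y)) = mat 1"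
  using assms by (simp add: Dg_sum[symmetric] sum_transition_rows Dg_onesv)

text \<open>Column \<open>j\<close> of \<open>WD(c)\<close> is \<open>c\<^sub>j\<close> times column \<open>j\<close> of \<open>W\<close>, whose entries sum to \<open>1\<close>.\<close>
lemma stochastic_mult_Dg_eq_0_iff:
  assumes "column_stochastic W"
  shows "W ** Dg c = 0 \<longleftrightarrow> c = 0"
proof
  assume WDc: "W ** Dg c = 0"
  have "c $ j = 0" for j
  proof -
    have "W $ i $ j * c $ j = (W ** Dg c) $ i $ j" for i
      by (simp add: matrix_matrix_mult_def Dg_def if_distrib cong: if_cong)
    then have "(\<Sum>i\<in>UNIV. W $ i $ j) * c $ j = 0"
      by (simp only: WDc sum_distrib_right) simp
    then show ?thesis
      using assms by (simp add: column_stochastic_def)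
  qed
  then show "c = 0"
    by (simp add: vec_eq_iff)
qed (simp add: Dg_0)

lemma onesv_mult_commut_eq_0:
  assumes "column_stochastic W" and "onesv v* A = 0"
  shows "onesv v* commut W A = 0"
  using assms
  by (simp add: commut_def vector_matrix_mult_diff_rdistrib vector_matrix_mul_assoc[symmetric]
      onesv_vector_matrix_mult_stochastic)

lemma commut_relation_iff:
  fixes W A D E :: "real^'n^'n"
  shows "commut W A ** D + W ** E = W ** D ** A - A ** (W ** D)
     \<longleftrightarrow> W ** commut D A = W ** E"
proof -
  have "commut W A ** D = W ** A ** D - A ** (W ** D)"
    by (simp add: commut_def matrix_diff_rdistrib matrix_mul_assoc)
  moreover have "W ** commut D A = W ** D ** A - W ** A ** D"
    by (simp add: commut_def matrix_diff_ldistrib matrix_mul_assoc)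
  moreover have "a - b + e = c - b \<longleftrightarrow> c - a = e" for a b c e :: "real^'n^'n"
    by (auto simp: algebra_simps)
  ultimately show ?thesis
    by presburger
qed

lemma sum_relation_eq_commut:
  assumes "transition_to V" and "(\<Sum>y\<in>UNIV. C y) = 0"
    and "\<forall>y. B ** Dg (V $ y) + W ** Dg (C y) = Wy W V y ** A - A ** Wy W V y"
  shows "B = commut W A"
proof -
  have "B = (\<Sum>y\<in>UNIV. B ** Dg (V $ y) + W ** Dg (C y))"
    using assms(1,2)
    by (simp add: sum.distrib matrix_sum_ldistrib[symmetric] Dg_sum[symmetric] sum_transition_rows
        Dg_onesv Dg_0)
  also have "\<dots> = (\<Sum>y\<in>UNIV. W ** Dg (V $ y) ** A - A ** (W ** Dg (V $ y)))"
    using assms(3) by (simp add: Wy_def)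
  also have "\<dots> = commut W A"
    using assms(1)
    by (simp add: commut_def sum_subtractf matrix_sum_ldistrib[symmetric] matrix_sum_rdistrib[symmetric]
        matrix_mul_assoc[symmetric] sum_Dg_transition)
  finally show ?thesis .
qed

lemma commut_sum_left: "commut (\<Sum>y\<in>S. F y) A = (\<Sum>y\<in>S. commut (F y) A)"
  by (simp add: commut_def matrix_sum_ldistrib matrix_sum_rdistrib sum_subtractf)

lemma sum_eq_0_if_commut_relation:
  assumes "column_stochastic W" and "transition_to V"
    and "\<forall>y. W ** commut (Dg (V $ y)) A = W ** Dg (C y)"
  shows "(\<Sum>y\<in>UNIV. C y) = 0"
proof -
  have "W ** Dg (\<Sum>y\<in>UNIV. C y) = (\<Sum>y\<in>UNIV. W ** commut (Dg (V $ y)) A)"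
    using assms(3) by (simp add: Dg_sum matrix_sum_ldistrib)
  also have "\<dots> = W ** commut (\<Sum>y\<in>UNIV. Dg (V $ y)) A"
    by (simp add: commut_sum_left matrix_sum_ldistrib)
  also have "\<dots> = 0"
    using assms(2) by (simp add: sum_Dg_transition commut_def)
  finally show ?thesis
    using stochastic_mult_Dg_eq_0_iff[OF assms(1)] by blast
qed

lemma L2I_relation_iff:
  assumes "column_stochastic W" and "transition_to V"
  shows "((B, C) \<in> L1I W V \<and> onesv v* A = 0 \<and>
          (\<forall>y. B ** Dg (V $ y) + W ** Dg (C y) = Wy W V y ** A - A ** Wy W V y))
     \<longleftrightarrow> (B = commut W A \<and> (commut W A, C) \<in> GI W V \<and> onesv v* A = 0 \<and>
          (\<forall>y. W ** commut (Dg (V $ y)) A = W ** Dg (C y)))"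
proof
  assume rel: "(B, C) \<in> L1I W V \<and> onesv v* A = 0 \<and>
          (\<forall>y. B ** Dg (V $ y) + W ** Dg (C y) = Wy W V y ** A - A ** Wy W V y)"
  then have "B = commut W A"
    using sum_relation_eq_commut[OF assms(2)] by (auto simp: L1I_def)
  with rel show "B = commut W A \<and> (commut W A, C) \<in> GI W V \<and> onesv v* A = 0 \<and>
          (\<forall>y. W ** commut (Dg (V $ y)) A = W ** Dg (C y))"
    by (auto simp: L1I_def Wy_def commut_relation_iff)
next
  assume rel: "B = commut W A \<and> (commut W A, C) \<in> GI W V \<and> onesv v* A = 0 \<and>
          (\<forall>y. W ** commut (Dg (V $ y)) A = W ** Dg (C y))"
  then show "(B, C) \<in> L1I W V \<and> onesv v* A = 0 \<and>
          (\<forall>y. B ** Dg (V $ y) + W ** Dg (C y) = Wy W V y ** A - A ** Wy W V y)"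
    using onesv_mult_commut_eq_0[OF assms(1)] sum_eq_0_if_commut_relation[OF assms]
    by (auto simp: L1I_def Wy_def commut_relation_iff)
qed

theorem theorem4:
  fixes W :: "real^'x^'x" and V :: "real^'x^'y" and P :: "real^'x"
  assumes "column_stochastic W" and "transition_to V" and "irreducible_mat W"
    and "distribution P"
  shows "L2I W V = {(commut W A, C) | A C. (commut W A, C) \<in> GI W V \<and>
            transpose A *v onesv = 0 \<and>
            (\<forall>y. W ** commut (Dg (V $ y)) A = W ** Dg (C y))} \<and>
    L2PI P W V = {(commut W A, C) | A C. (commut W A, C) \<in> GI W V \<and>
            transpose A *v onesv = 0 \<and> A *v P = 0 \<and>
            (\<forall>y. W ** commut (Dg (V $ y)) A = W ** Dg (C y))}"
proof -
  note relation_iff = L2I_relation_iff[OF assms(1,2)]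
  have "(B, C) \<in> L2I W V \<longleftrightarrow> (\<exists>A. (B, C) \<in> L1I W V \<and> onesv v* A = 0 \<and>
          (\<forall>y. B ** Dg (V $ y) + W ** Dg (C y) = Wy W V y ** A - A ** Wy W V y))" for B C
    by (auto simp: L2I_def L2_def fun_eq_iff)
  moreover have "(B, C) \<in> L2PI P W V \<longleftrightarrow> (\<exists>A. ((B, C) \<in> L1I W V \<and> onesv v* A = 0 \<and>
          (\<forall>y. B ** Dg (V $ y) + W ** Dg (C y) = Wy W V y ** A - A ** Wy W V y)) \<and> A *v P = 0)"
    for B C
    by (auto simp: L2PI_def L2P_def fun_eq_iff)
  ultimately show ?thesis
    unfolding relation_iff transpose_matrix_vector set_eq_iff by auto
qed

end
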